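(* Let $(X,\mathcal U)$ be a non-archimedean non-discrete uniform space. Then for every $n\in\mathbb N$ the set $B_n$ of all elements of $A(X)$ of length at most $n$ has empty interior in $A_{NA}(X,\mathcal U)$.
   Context: A uniform space is non-archimedean if its (Hausdorff) uniformity has a base of equivalence relations; it is discrete if the diagonal is an entourage. $A_{NA}(X,\mathcal U)$ is the free abelian non-archimedean group of $(X,\mathcal U)$: the abelian Hausdorff group with a local base at $0$ of open subgroups, realized on the free abelian group $A(X)$, such that every uniformly continuous map from $X$ into an abelian non-archimedean group extends uniquely to a continuous homomorphism. The length of a nonzero $w=\sum_{i=1}^n k_ix_i\in A(X)$ (distinct $x_i\in X$, $k_i\in\mathbb Z\setminus\{0\}$) is $\sum_i|k_i|$; the length of $0$ is $0$. *)

theory Defs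
  imports "HOL-Analysis.Analysis" "HOL-Library.Function_Algebras"
begin

definition uniformity_on :: "'a set \<Rightarrow> ('a \<times> 'a) set set \<Rightarrow> bool" where
  "uniformity_on X U \<longleftrightarrow>
     U \<noteq> {} \<and>
     (\<forall>E\<in>U. Id_on X \<subseteq> E \<and> E \<subseteq> X \<times> X) \<and>
     (\<forall>E F. E \<in> U \<and> E \<subseteq> F \<and> F \<subseteq> X \<times> X \<longrightarrow> F \<in> U) \<and>
     (\<forall>E\<in>U. \<forall>F\<in>U. E \<inter> F \<in> U) \<and>
     (\<forall>E\<in>U. E\<inverse> \<in> U) \<and>
     (\<forall>E\<in>U. \<exists>F\<in>U. F O F \<subseteq> E)"

definition hausdorff_uniformity :: "'a set \<Rightarrow> ('a \<times> 'a) set set \<Rightarrow> bool" where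
  "hausdorff_uniformity X U \<longleftrightarrow> uniformity_on X U \<and> \<Inter>U = Id_on X"

definition non_archimedean_uniform_space :: "'a set \<Rightarrow> ('a \<times> 'a) set set \<Rightarrow> bool" where
  "non_archimedean_uniform_space X U \<longleftrightarrow>
     hausdorff_uniformity X U \<and> (\<forall>E\<in>U. \<exists>F\<in>U. equiv X F \<and> F \<subseteq> E)"

definition discrete_uniform_space :: "'a set \<Rightarrow> ('a \<times> 'a) set set \<Rightarrow> bool" where
  "discrete_uniform_space X U \<longleftrightarrow> Id_on X \<in> U"

definition supp :: "('a \<Rightarrow> int) \<Rightarrow> 'a set" where
  "supp w = {x. w x \<noteq> 0}"

definition free_ab :: "'a set \<Rightarrow> ('a \<Rightarrow> int) set" where
  "free_ab X = {w. finite (supp w) \<and> supp w \<subseteq> X}"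

definition gen :: "'a \<Rightarrow> ('a \<Rightarrow> int)" where
  "gen x = (\<lambda>y. if y = x then 1 else 0)"

definition word_length :: "('a \<Rightarrow> int) \<Rightarrow> nat" where
  "word_length w = (\<Sum>x\<in>supp w. nat \<bar>w x\<bar>)"

definition B_len :: "'a set \<Rightarrow> nat \<Rightarrow> ('a \<Rightarrow> int) set" where
  "B_len X n = {w \<in> free_ab X. word_length w \<le> n}"

definition subgroup_of_free_ab :: "'a set \<Rightarrow> ('a \<Rightarrow> int) set \<Rightarrow> bool" where
  "subgroup_of_free_ab X H \<longleftrightarrow> H \<subseteq> free_ab X \<and> 0 \<in> H \<and> (\<forall>a\<in>H. \<forall>b\<in>H. a - b \<in> H)"

definition group_topology_on :: "'a set \<Rightarrow> ('a \<Rightarrow> int) topology \<Rightarrow> bool" where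
  "group_topology_on X T \<longleftrightarrow>
     topspace T = free_ab X \<and>
     continuous_map (prod_topology T T) T (\<lambda>(a, b). a - b)"

definition NA_group_topology_on :: "'a set \<Rightarrow> ('a \<Rightarrow> int) topology \<Rightarrow> bool" where
  "NA_group_topology_on X T \<longleftrightarrow>
     group_topology_on X T \<and>
     (\<forall>V. openin T V \<and> 0 \<in> V \<longrightarrow>
        (\<exists>H. subgroup_of_free_ab X H \<and> openin T H \<and> H \<subseteq> V))"

text \<open>Uniform continuity of the embedding X \<rightarrow> A(X) w.r.t. the (two-sided, since abelian)
  group uniformity of T.\<close>
definition gen_unif_cont :: "'a set \<Rightarrow> ('a \<times> 'a) set set \<Rightarrow> ('a \<Rightarrow> int) topology \<Rightarrow> bool" where
  "gen_unif_cont X U T \<longleftrightarrow>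
     (\<forall>V. openin T V \<and> 0 \<in> V \<longrightarrow> (\<exists>E\<in>U. \<forall>(x, y)\<in>E. gen x - gen y \<in> V))"

text \<open>The topology of A_NA(X,U): the Hausdorff non-archimedean group topology on A(X)
  making X \<rightarrow> A(X) uniformly continuous which is finer than every non-archimedean
  group topology on A(X) with this property (equivalently, the one with the universal
  property for uniformly continuous maps into abelian non-archimedean groups).\<close>
definition free_NA_topology :: "'a set \<Rightarrow> ('a \<times> 'a) set set \<Rightarrow> ('a \<Rightarrow> int) topology \<Rightarrow> bool" where
  "free_NA_topology X U T \<longleftrightarrow>
     NA_group_topology_on X T \<and> Hausdorff_space T \<and> gen_unif_cont X U T \<and>
     (\<forall>T'. NA_group_topology_on X T' \<and> gen_unif_cont X U T' \<longrightarrow>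
        (\<forall>V. openin T' V \<longrightarrow> openin T V))"

end

theory Submission
  imports Defs
begin

text \<open>If some w had a neighbourhood inside \<open>B_n\<close>, that neighbourhood would contain a coset
  \<open>w + H\<close> of an open subgroup H. Since X is not discrete, uniform continuity of the embedding
  puts some \<open>x - y\<close> with \<open>x \<noteq> y\<close> into H, hence all its multiples; but the coefficient of x
  in \<open>w + k(x - y)\<close> is unbounded in k, so these elements do not all have length at most n.\<close>

lemma abs_coeff_le_word_length:
  assumes "finite (supp v)"
  shows "nat \<bar>v x\<bar> \<le> word_length v"
proof (cases "x \<in> supp v")
  case True
  then show ?thesis
    unfolding word_length_def using member_le_sum[of x "supp v" "\<lambda>x. nat \<bar>v x\<bar>"] assms by simp
qed (simp add: supp_def)

lemma subgroup_of_free_ab_mult: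
  assumes "subgroup_of_free_ab X H" and "h \<in> H"
  shows "(\<lambda>z. int k * h z) \<in> H"
proof (induction k)
  case 0
  have "(\<lambda>z. int 0 * h z) = 0" by (simp add: fun_eq_iff)
  then show ?case using assms(1) by (simp add: subgroup_of_free_ab_def)
next
  case (Suc k)
  have "0 - h \<in> H" using assms unfolding subgroup_of_free_ab_def by blast
  then have "(\<lambda>z. int k * h z) - (0 - h) \<in> H"
    using assms(1) Suc unfolding subgroup_of_free_ab_def by blast
  moreover have "(\<lambda>z. int k * h z) - (0 - h) = (\<lambda>z. int (Suc k) * h z)"
    by (simp add: fun_eq_iff algebra_simps)
  ultimately show ?case by simp
qed

lemma group_topology_translation_continuous:
  assumes "group_topology_on X T" and "w \<in> free_ab X"
  shows "continuous_map T T (\<lambda>h. w + h)"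
proof -
  have top: "topspace T = free_ab X"
    and diff: "continuous_map (prod_topology T T) T (\<lambda>(a, b). a - b)"
    using assms(1) by (auto simp: group_topology_on_def)
  have "(0::'a \<Rightarrow> int) \<in> free_ab X" by (simp add: free_ab_def supp_def)
  then have "continuous_map T (prod_topology T T) (\<lambda>h. (0, h))"
    using top by (simp add: continuous_map_pairwise o_def)
  from continuous_map_compose[OF this diff]
  have "continuous_map T T (\<lambda>h. 0 - h)" by (simp add: o_def)
  then have "continuous_map T (prod_topology T T) (\<lambda>h. (w, 0 - h))"
    using assms(2) top by (simp add: continuous_map_pairwise o_def)
  from continuous_map_compose[OF this diff] show ?thesis by (simp add: o_def)
qed

lemma NA_group_topology_open_contains_coset:
  assumes "NA_group_topology_on X T" and "openin T W" and "w \<in> W"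
  obtains H where "subgroup_of_free_ab X H" "openin T H" "\<And>h. h \<in> H \<Longrightarrow> w + h \<in> W"
proof -
  have top: "topspace T = free_ab X" and group: "group_topology_on X T"
    using assms(1) by (auto simp: NA_group_topology_on_def group_topology_on_def)
  have "w \<in> free_ab X" using assms(2,3) openin_subset top by blast
  define V where "V = {h \<in> topspace T. w + h \<in> W}"
  have "openin T V"
    unfolding V_def
    using openin_continuous_map_preimage[OF
        group_topology_translation_continuous[OF group \<open>w \<in> free_ab X\<close>] assms(2)]
    by simp
  moreover have "0 \<in> V" using assms(3) top by (simp add: V_def free_ab_def supp_def)
  ultimately obtain H where "subgroup_of_free_ab X H" "openin T H" "H \<subseteq> V"
    using assms(1) unfolding NA_group_topology_on_def by blast
  then show ?thesis using that V_def by blast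
qed

lemma non_discrete_entourage_off_diagonal:
  assumes "uniformity_on X U" and "\<not> discrete_uniform_space X U" and "E \<in> U"
  obtains x y where "(x, y) \<in> E" "x \<noteq> y"
proof -
  have "Id_on X \<subseteq> E" "E \<subseteq> X \<times> X" using assms(1,3) unfolding uniformity_on_def by blast+
  moreover have "E \<noteq> Id_on X" using assms(2,3) unfolding discrete_uniform_space_def by metis
  ultimately have "\<not> E \<subseteq> Id_on X" by blast
  then show ?thesis using that \<open>E \<subseteq> X \<times> X\<close> by (force simp: Id_on_def)
qed

lemma coset_not_subset_B_len:
  assumes "subgroup_of_free_ab X H" and "d \<in> H" and "d x \<noteq> 0"
  shows "\<exists>h\<in>H. w + h \<notin> B_len X n"
proof -
  define k where "k = n + 1 + nat \<bar>w x\<bar>"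
  define v where "v = w + (\<lambda>z. int k * d z)"
  have "int k \<le> int k * \<bar>d x\<bar>" using assms(3) by (simp add: mult_le_cancel_left1) linarith
  then have "nat \<bar>v x\<bar> > n" unfolding v_def k_def by (simp add: abs_mult)
  then have "v \<notin> B_len X n"
    using abs_coeff_le_word_length[of v x] by (auto simp: B_len_def free_ab_def)
  then show ?thesis using subgroup_of_free_ab_mult[OF assms(1,2)] v_def by blast
qed

theorem lemma4p20:
  fixes X :: "'a set" and U :: "('a \<times> 'a) set set" and T :: "('a \<Rightarrow> int) topology"
  assumes "non_archimedean_uniform_space X U"
    and "\<not> discrete_uniform_space X U"
    and "free_NA_topology X U T"
  shows "\<forall>n::nat. T interior_of (B_len X n) = {}"
proof (intro allI)
  fix n :: nat
  have NA: "NA_group_topology_on X T" and unif_cont: "gen_unif_cont X U T"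
    using assms(3) by (auto simp: free_NA_topology_def)
  have unif: "uniformity_on X U"
    using assms(1) by (auto simp: non_archimedean_uniform_space_def hausdorff_uniformity_def)
  show "T interior_of (B_len X n) = {}"
  proof (rule ccontr)
    assume "T interior_of (B_len X n) \<noteq> {}"
    then obtain w W where W: "openin T W" "w \<in> W" "W \<subseteq> B_len X n"
      by (auto simp: interior_of_def)
    obtain H where H: "subgroup_of_free_ab X H" "openin T H" "\<And>h. h \<in> H \<Longrightarrow> w + h \<in> W"
      using NA_group_topology_open_contains_coset[OF NA W(1,2)] by blast
    have "0 \<in> H" using H(1) by (simp add: subgroup_of_free_ab_def)
    then obtain E where E: "E \<in> U" "\<forall>(x, y)\<in>E. gen x - gen y \<in> H"
      using unif_cont H(2) unfolding gen_unif_cont_def by blast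
    obtain x y where "(x, y) \<in> E" "x \<noteq> y"
      using non_discrete_entourage_off_diagonal[OF unif assms(2) E(1)] .
    then have "gen x - gen y \<in> H" "(gen x - gen y) x \<noteq> 0"
      using E(2) by (auto simp: gen_def)
    then show False using coset_not_subset_B_len[OF H(1)] H(3) W(3) by blast
  qed
qed

end
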